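(* Let $f:\mathbb{R}^n\times\mathbb{R}^m\to\mathbb{R}^n$ be a polynomial map and let $\boldsymbol\psi:\mathbb{R}^n\to\mathbb{R}^m$ be a function whose graph admits the representation \[ \{(x,\boldsymbol\psi(x)) : x\in\mathbb{R}^n\} = \{(x,u)\in\mathbb{R}^n\times\mathbb{R}^m \mid \exists\,\lambda\in\mathbb{R}^{n_\lambda}\ \text{s.t.}\ g(x,u,\lambda)\ge 0,\ h(x,u,\lambda)=0\} \] for some vector-valued polynomial maps $g,h$ (inequalities componentwise). Consider the closed-loop system $x_{k+1} = f(x_k,\boldsymbol\psi(x_k))$. Let \[ \mathbf{K} = \{(x,u,\lambda,x^+,u^+,\lambda^+) \mid x^+ = f(x,u),\ g(x,u,\lambda)\ge 0,\ h(x,u,\lambda)=0,\ g(x^+,u^+,\lambda^+)\ge 0,\ h(x^+,u^+,\lambda^+)=0\}. \] Suppose a continuous function $V:\mathbb{R}^n\times\mathbb{R}^m\times\mathbb{R}^{n_\lambda}\to\mathbb{R}$ satisfies, for all $(x,u,\lambda,x^+,u^+,\lambda^+)\in\mathbf{K}$, \[ V(x^+,u^+,\lambda^+) - V(x,u,\lambda) \le -\|x\|_2^2, \qquad V(x,u,\lambda)\ge 0. \] Then: (1) the closed-loop system is globally attractive, i.e., $x_k\to 0$ for every initial condition $x_0$; (2) if in addition the function $x\mapsto \inf\{\|u\|_2+\|\lambda\|_2 \mid g(x,u,\lambda)\ge 0,\ h(x,u,\lambda)=0\}$ is bounded on some neighborhood of the origin, or $V$ does not depend on $(u,\lambda)$,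 then the closed-loop system is globally asymptotically stable.
   Context: The closed-loop system $x^+=f(x,\boldsymbol\psi(x))$ is called globally asymptotically stable if (i) for all initial conditions $x_0$, $\lim_{k\to\infty}x_k = 0$ (global attractivity), and (ii) for every $\epsilon>0$ there exists $\delta>0$ such that $\|x_0\|_2\le\delta$ implies $\|x_k\|_2\le\epsilon$ for all $k$ (Lyapunov stability). *)

theory Defs
  imports "HOL-Analysis.Analysis"
begin

inductive poly_fun :: "('a::euclidean_space \<Rightarrow> real) \<Rightarrow> bool" where
  poly_const: "poly_fun (\<lambda>x. c)"
| poly_lin:   "poly_fun (\<lambda>x. x \<bullet> b)"
| poly_add:   "poly_fun p \<Longrightarrow> poly_fun q \<Longrightarrow> poly_fun (\<lambda>x. p x + q x)"
| poly_mult:  "poly_fun p \<Longrightarrow> poly_fun q \<Longrightarrow> poly_fun (\<lambda>x. p x * q x)"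

definition poly_map :: "('a::euclidean_space \<Rightarrow> 'b::euclidean_space) \<Rightarrow> bool" where
  "poly_map F \<longleftrightarrow> (\<forall>b\<in>Basis. poly_fun (\<lambda>x. F x \<bullet> b))"

definition globally_attractive :: "('a::real_normed_vector \<Rightarrow> 'a) \<Rightarrow> bool" where
  "globally_attractive F \<longleftrightarrow> (\<forall>x0. (\<lambda>k. (F ^^ k) x0) \<longlonglongrightarrow> 0)"

definition lyapunov_stable :: "('a::real_normed_vector \<Rightarrow> 'a) \<Rightarrow> bool" where
  "lyapunov_stable F \<longleftrightarrow>
     (\<forall>\<epsilon>>0. \<exists>\<delta>>0. \<forall>x0. norm x0 \<le> \<delta> \<longrightarrow> (\<forall>k. norm ((F ^^ k) x0) \<le> \<epsilon>))"

definition GAS :: "('a::real_normed_vector \<Rightarrow> 'a) \<Rightarrow> bool" where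
  "GAS F \<longleftrightarrow> globally_attractive F \<and> lyapunov_stable F"

end

theory Submission
  imports Defs
begin

(* Write F x = f (x, \<psi> x). Lifting each state x to some feasible (x, u, \<lambda>), necessarily
   with u = \<psi> x, turns V into a function W of the state with W (F x) \<le> W x - \<parallel>x\<parallel>\<^sup>2
   and W \<ge> 0, so the squared norms along a trajectory are summable and the trajectory
   tends to 0.

   For stability it suffices that W has one value c as a cluster value along every sequence
   tending to 0: comparing W x with the tail of the trajectory from F x gives
   W x \<ge> c + \<parallel>x\<parallel>\<^sup>2, and a trajectory that starts near 0 and leaves the \<epsilon>-ball
   then forces W \<ge> c + \<epsilon>\<^sup>2 arbitrarily close to 0, contradicting the cluster value c.
   If V ignores (u, \<lambda>), continuity of V gives c. Otherwise the boundedness hypothesis lets us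
   choose bounded lifts near 0; since the feasible set is closed, lifts of a null sequence
   subconverge to a feasible point over 0, and V is constant on that fibre: first F 0 = 0, and
   then the decrease inequality at x = 0 holds in both directions. *)

lemma lyapunov_sum_bound:
  fixes F :: "'a::real_normed_vector \<Rightarrow> 'a" and W :: "'a \<Rightarrow> real"
  assumes decrease: "\<And>x. W (F x) \<le> W x - norm x ^ 2"
  shows "(\<Sum>j<k. norm ((F ^^ j) x) ^ 2) \<le> W x - W ((F ^^ k) x)"
proof (induction k)
  case (Suc k)
  then show ?case using decrease[of "(F ^^ k) x"] by simp
qed simp

lemma lyapunov_iter_le:
  fixes F :: "'a::real_normed_vector \<Rightarrow> 'a" and W :: "'a \<Rightarrow> real"
  assumes decrease: "\<And>x. W (F x) \<le> W x - norm x ^ 2"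
  shows "W ((F ^^ k) x) \<le> W x"
proof -
  have "0 \<le> (\<Sum>j<k. norm ((F ^^ j) x) ^ 2)" by (simp add: sum_nonneg)
  then show ?thesis using lyapunov_sum_bound[OF decrease, where k=k and x=x] by linarith
qed

lemma globally_attractive_if_lyapunov:
  fixes F :: "'a::real_normed_vector \<Rightarrow> 'a" and W :: "'a \<Rightarrow> real"
  assumes decrease: "\<And>x. W (F x) \<le> W x - norm x ^ 2"
    and nonneg: "\<And>x. 0 \<le> W x"
  shows "globally_attractive F"
  unfolding globally_attractive_def
proof
  fix x
  have "summable (\<lambda>j. norm ((F ^^ j) x) ^ 2)"
  proof (rule summableI_nonneg_bounded)
    show "(\<Sum>j<k. norm ((F ^^ j) x) ^ 2) \<le> W x" for k
      using lyapunov_sum_bound[OF decrease, where k=k and x=x] nonneg[of "(F ^^ k) x"] by linarith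
  qed simp
  then have "(\<lambda>j. sqrt (norm ((F ^^ j) x) ^ 2)) \<longlonglongrightarrow> sqrt 0"
    by (intro tendsto_real_sqrt summable_LIMSEQ_zero)
  then show "(\<lambda>k. (F ^^ k) x) \<longlonglongrightarrow> 0" by (simp add: tendsto_norm_zero_iff)
qed

lemma lyapunov_lower_bound:
  fixes F :: "'a::real_normed_vector \<Rightarrow> 'a" and W :: "'a \<Rightarrow> real"
  assumes decrease: "\<And>x. W (F x) \<le> W x - norm x ^ 2"
    and attractive: "globally_attractive F"
    and cluster: "\<And>y. y \<longlonglongrightarrow> 0 \<Longrightarrow> \<exists>r. strict_mono r \<and> (\<lambda>j. W (y (r j))) \<longlonglongrightarrow> c"
  shows "c + norm x ^ 2 \<le> W x"
proof -
  have "(\<lambda>k. (F ^^ k) (F x)) \<longlonglongrightarrow> 0"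
    using attractive unfolding globally_attractive_def by blast
  then obtain r where "(\<lambda>j. W ((F ^^ r j) (F x))) \<longlonglongrightarrow> c"
    using cluster by blast
  moreover have "W ((F ^^ k) (F x)) \<le> W x - norm x ^ 2" for k
    using lyapunov_iter_le[OF decrease, where k=k and x="F x"] decrease[of x] by linarith
  ultimately have "c \<le> W x - norm x ^ 2" by (intro LIMSEQ_le_const2) auto
  then show ?thesis by simp
qed

lemma lyapunov_stable_if_cluster_value:
  fixes F :: "'a::real_normed_vector \<Rightarrow> 'a" and W :: "'a \<Rightarrow> real"
  assumes decrease: "\<And>x. W (F x) \<le> W x - norm x ^ 2"
    and attractive: "globally_attractive F"
    and cluster: "\<And>y. y \<longlonglongrightarrow> 0 \<Longrightarrow> \<exists>r. strict_mono r \<and> (\<lambda>j. W (y (r j))) \<longlonglongrightarrow> c"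
  shows "lyapunov_stable F"
  unfolding lyapunov_stable_def
proof (rule ccontr)
  assume "\<not> (\<forall>\<epsilon>>0. \<exists>\<delta>>0. \<forall>x0. norm x0 \<le> \<delta> \<longrightarrow> (\<forall>k. norm ((F ^^ k) x0) \<le> \<epsilon>))"
  then obtain \<epsilon> where "\<epsilon> > 0"
    and escape: "\<And>\<delta>. \<delta> > 0 \<Longrightarrow> \<exists>x0 k. norm x0 \<le> \<delta> \<and> \<epsilon> < norm ((F ^^ k) x0)"
    by (auto simp: not_le)
  have "\<exists>x0 k. norm x0 < 1 / real (Suc j) \<and> \<epsilon> < norm ((F ^^ k) x0)" for j
  proof -
    obtain x0 k where "norm x0 \<le> 1 / real (Suc (Suc j))" "\<epsilon> < norm ((F ^^ k) x0)"
      using escape[of "1 / real (Suc (Suc j))"] by auto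
    moreover have "1 / real (Suc (Suc j)) < 1 / real (Suc j)" by (simp add: frac_less2)
    ultimately show ?thesis by (meson order_le_less_trans)
  qed
  then obtain X K where X: "\<And>j. norm (X j) < 1 / real (Suc j)"
    and K: "\<And>j. \<epsilon> < norm ((F ^^ K j) (X j))"
    by metis
  obtain r where "(\<lambda>j. W (X (r j))) \<longlonglongrightarrow> c"
    using cluster[OF LIMSEQ_norm_0[OF X]] by blast
  moreover have "c + \<epsilon> ^ 2 \<le> W (X j)" for j
  proof -
    have "\<epsilon> ^ 2 \<le> norm ((F ^^ K j) (X j)) ^ 2"
      using K[of j] \<open>\<epsilon> > 0\<close> by (intro power_mono) auto
    then show ?thesis
      using lyapunov_lower_bound[OF decrease attractive cluster, where x="(F ^^ K j) (X j)"]
        lyapunov_iter_le[OF decrease, where k="K j" and x="X j"]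
      by linarith
  qed
  ultimately have "c + \<epsilon> ^ 2 \<le> c" by (intro LIMSEQ_le_const) auto
  then show False using \<open>\<epsilon> > 0\<close> by simp
qed

locale lifted_lyapunov =
  fixes F :: "'a::real_normed_vector \<Rightarrow> 'a"
    and S :: "('a \<times> 'b::topological_space) set"
    and V :: "'a \<times> 'b \<Rightarrow> real"
  assumes lift_exists: "\<And>x. \<exists>b. (x, b) \<in> S"
    and decrease: "\<And>x b b'. (x, b) \<in> S \<Longrightarrow> (F x, b') \<in> S \<Longrightarrow> V (F x, b') \<le> V (x, b) - norm x ^ 2"
    and nonneg: "\<And>x b. (x, b) \<in> S \<Longrightarrow> 0 \<le> V (x, b)"
begin

theorem globally_attractive: "globally_attractive F"
proof -
  obtain B where B: "\<And>x. (x, B x) \<in> S" using lift_exists by metis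
  show ?thesis
    by (rule globally_attractive_if_lyapunov[where W = "\<lambda>x. V (x, B x)"])
      (use decrease[OF B B] nonneg[OF B] in auto)
qed

lemma lyapunov_stable_if_lift_cluster:
  assumes B: "\<And>x. (x, B x) \<in> S"
    and cluster: "\<And>y. y \<longlonglongrightarrow> 0 \<Longrightarrow>
      \<exists>r b. strict_mono r \<and> (\<lambda>j. V (y (r j), B (y (r j)))) \<longlonglongrightarrow> V (0, b) \<and> (0, b) \<in> S"
  shows "lyapunov_stable F"
proof -
  define W where "W x = V (x, B x)" for x
  have W_decrease: "W (F x) \<le> W x - norm x ^ 2" for x
    unfolding W_def by (rule decrease[OF B B])
  have "F 0 = 0"
  proof -
    have "(\<lambda>k. (F ^^ k) (F (F 0))) \<longlonglongrightarrow> 0"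
      using globally_attractive unfolding globally_attractive_def by blast
    then obtain r b where r: "(\<lambda>j. W ((F ^^ r j) (F (F 0)))) \<longlonglongrightarrow> V (0, b)" and "(0, b) \<in> S"
      using cluster unfolding W_def by blast
    have "W (F 0) \<le> V (0, b)"
      using decrease[OF \<open>(0, b) \<in> S\<close> B] unfolding W_def by simp
    then have "W ((F ^^ k) (F (F 0))) \<le> V (0, b) - norm (F 0) ^ 2" for k
      using lyapunov_iter_le[OF W_decrease, where k=k and x="F (F 0)"] W_decrease[of "F 0"]
      by linarith
    then have "V (0, b) \<le> V (0, b) - norm (F 0) ^ 2"
      using r by (intro LIMSEQ_le_const2) auto
    then show ?thesis by simp
  qed
  have fibre_const: "V (0, b) = V (0, B 0)" if "(0, b) \<in> S" for b
  proof -
    have "(F 0, b) \<in> S" "(F 0, B 0) \<in> S" using that B[of 0] \<open>F 0 = 0\<close> by simp_all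
    then show ?thesis using decrease[OF that] decrease[OF B[of 0]] \<open>F 0 = 0\<close> by force
  qed
  show ?thesis
  proof (rule lyapunov_stable_if_cluster_value[OF W_decrease globally_attractive])
    fix y :: "nat \<Rightarrow> 'a" assume "y \<longlonglongrightarrow> 0"
    then show "\<exists>r. strict_mono r \<and> (\<lambda>j. W (y (r j))) \<longlonglongrightarrow> V (0, B 0)"
      using cluster fibre_const unfolding W_def by metis
  qed
qed

lemma lyapunov_stable_if_independent:
  assumes V_cont: "continuous_on UNIV V"
    and independent: "\<And>x b b'. V (x, b) = V (x, b')"
  shows "lyapunov_stable F"
proof -
  obtain B where B: "\<And>x. (x, B x) \<in> S" using lift_exists by metis
  show ?thesis
  proof (rule lyapunov_stable_if_lift_cluster[OF B])
    fix y :: "nat \<Rightarrow> 'a" assume "y \<longlonglongrightarrow> 0"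
    then have "(\<lambda>j. V (y j, B 0)) \<longlonglongrightarrow> V (0, B 0)"
      by (intro continuous_on_tendsto_compose[OF V_cont] tendsto_intros) auto
    moreover have "V (y j, B (y j)) = V (y j, B 0)" for j by (rule independent)
    ultimately have "(\<lambda>j. V (y (id j), B (y (id j)))) \<longlonglongrightarrow> V (0, B 0)" by simp
    then show "\<exists>r b. strict_mono r \<and> (\<lambda>j. V (y (r j), B (y (r j)))) \<longlonglongrightarrow> V (0, b) \<and> (0, b) \<in> S"
      using B strict_mono_id by blast
  qed
qed

lemma lyapunov_stable_if_lifts_subconverge:
  assumes V_cont: "continuous_on UNIV V"
    and B: "\<And>x. (x, B x) \<in> S"
    and subconverge: "\<And>y. y \<longlonglongrightarrow> 0 \<Longrightarrow>
      \<exists>r b. strict_mono r \<and> (\<lambda>j. B (y (r j))) \<longlonglongrightarrow> b \<and> (0, b) \<in> S"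
  shows "lyapunov_stable F"
proof (rule lyapunov_stable_if_lift_cluster[OF B])
  fix y :: "nat \<Rightarrow> 'a" assume "y \<longlonglongrightarrow> 0"
  then obtain r b where r: "strict_mono r" and lim: "(\<lambda>j. B (y (r j))) \<longlonglongrightarrow> b" and "(0, b) \<in> S"
    using subconverge by blast
  have "(\<lambda>j. y (r j)) \<longlonglongrightarrow> 0"
    using LIMSEQ_subseq_LIMSEQ[OF \<open>y \<longlonglongrightarrow> 0\<close> r] by (simp add: o_def)
  then have "(\<lambda>j. V (y (r j), B (y (r j)))) \<longlonglongrightarrow> V (0, b)"
    by (intro continuous_on_tendsto_compose[OF V_cont] tendsto_Pair lim) auto
  then show "\<exists>r b. strict_mono r \<and> (\<lambda>j. V (y (r j), B (y (r j)))) \<longlonglongrightarrow> V (0, b) \<and> (0, b) \<in> S"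
    using r \<open>(0, b) \<in> S\<close> by blast
qed

end

lemma bounded_lift_if_bounded_Inf:
  fixes c :: "'b::real_normed_vector \<Rightarrow> real"
  assumes lift_exists: "\<And>x. \<exists>b. (x, b) \<in> S"
    and norm_le: "\<And>b. norm b \<le> c b"
    and U: "open U" "a \<in> U"
    and bounded_Inf: "bounded ((\<lambda>x. Inf (c ` {b. (x, b) \<in> S})) ` U)"
  obtains B R where "\<And>x. (x, B x) \<in> S" "eventually (\<lambda>x. B x \<in> cball 0 R) (nhds a)"
proof -
  obtain M where M: "\<And>x. x \<in> U \<Longrightarrow> \<bar>Inf (c ` {b. (x, b) \<in> S})\<bar> \<le> M"
    using bounded_Inf unfolding bounded_iff real_norm_def by blast
  have "\<exists>b. (x, b) \<in> S \<and> (x \<in> U \<longrightarrow> norm b \<le> M + 1)" for x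
  proof (cases "x \<in> U")
    case True
    have "c ` {b. (x, b) \<in> S} \<noteq> {}" using lift_exists[of x] by blast
    moreover have "Inf (c ` {b. (x, b) \<in> S}) < M + 1"
      using abs_le_D1[OF M[OF True]] by linarith
    ultimately have "\<exists>a \<in> c ` {b. (x, b) \<in> S}. a < M + 1" by (rule cInf_lessD)
    then obtain b where "(x, b) \<in> S" "c b < M + 1" by blast
    moreover have "norm b \<le> c b" by (rule norm_le)
    ultimately show ?thesis by force
  qed (use lift_exists in blast)
  then obtain B where B: "\<And>x. (x, B x) \<in> S" "\<And>x. x \<in> U \<Longrightarrow> norm (B x) \<le> M + 1"
    by metis
  have "eventually (\<lambda>x. B x \<in> cball 0 (M + 1)) (nhds a)"
    unfolding eventually_nhds using U B(2) by auto
  with B(1) show ?thesis by (rule that)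
qed

lemma bounded_lifts_subconverge:
  fixes y :: "nat \<Rightarrow> 'a::metric_space" and B :: "'a \<Rightarrow> 'b::heine_borel"
  assumes "closed S"
    and lift: "\<And>x. (x, B x) \<in> S"
    and "bounded K" "eventually (\<lambda>x. B x \<in> K) (nhds a)"
    and "y \<longlonglongrightarrow> a"
  shows "\<exists>r b. strict_mono r \<and> (\<lambda>j. B (y (r j))) \<longlonglongrightarrow> b \<and> (a, b) \<in> S"
proof -
  have "eventually (\<lambda>j. B (y j) \<in> K) sequentially"
    using eventually_compose_filterlim assms(4,5) by blast
  then obtain N where N: "\<And>j. N \<le> j \<Longrightarrow> B (y j) \<in> K"
    unfolding eventually_sequentially by blast
  have "bounded (range (\<lambda>j. B (y (j + N))))"
    using N by (intro bounded_subset[OF \<open>bounded K\<close>]) auto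
  then obtain b r' where "strict_mono r'" and lim': "((\<lambda>j. B (y (j + N))) \<circ> r') \<longlonglongrightarrow> b"
    using bounded_imp_convergent_subsequence by blast
  define r where "r j = r' j + N" for j
  have r: "strict_mono r"
    using \<open>strict_mono r'\<close> unfolding r_def strict_mono_def by simp
  have lim: "(\<lambda>j. B (y (r j))) \<longlonglongrightarrow> b"
    using lim' unfolding r_def o_def .
  have "(\<lambda>j. y (r j)) \<longlonglongrightarrow> a"
    using LIMSEQ_subseq_LIMSEQ[OF \<open>y \<longlonglongrightarrow> a\<close> r] by (simp add: o_def)
  then have "(\<lambda>j. (y (r j), B (y (r j)))) \<longlonglongrightarrow> (a, b)"
    using lim by (rule tendsto_Pair)
  then have "(a, b) \<in> S"
    by (rule closed_sequentially[OF \<open>closed S\<close>, rotated]) (rule lift)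
  with r lim show ?thesis by blast
qed

lemma lyapunov_stable_if_bounded_Inf:
  fixes F :: "'a::real_normed_vector \<Rightarrow> 'a"
    and S :: "('a \<times> 'b::{real_normed_vector, heine_borel}) set"
    and c :: "'b \<Rightarrow> real"
  assumes "lifted_lyapunov F S V"
    and V_cont: "continuous_on UNIV V"
    and "closed S"
    and norm_le: "\<And>b. norm b \<le> c b"
    and U: "open U" "0 \<in> U"
    and bounded_Inf: "bounded ((\<lambda>x. Inf (c ` {b. (x, b) \<in> S})) ` U)"
  shows "lyapunov_stable F"
proof -
  interpret lifted_lyapunov F S V by fact
  obtain B R where B: "\<And>x. (x, B x) \<in> S" "eventually (\<lambda>x. B x \<in> cball 0 R) (nhds 0)"
    using bounded_lift_if_bounded_Inf[OF lift_exists norm_le U bounded_Inf] by blast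
  show ?thesis
    using lyapunov_stable_if_lifts_subconverge[OF V_cont B(1)]
      bounded_lifts_subconverge[OF \<open>closed S\<close> B(1) bounded_cball B(2)] by blast
qed

lemma lifted_lyapunov_closed_loop:
  fixes f :: "'a::real_normed_vector \<times> 'u::topological_space \<Rightarrow> 'a"
    and S :: "('a \<times> 'u \<times> 'l::topological_space) set"
  assumes graph: "\<And>x u. u = \<psi> x \<longleftrightarrow> (\<exists>l. (x, u, l) \<in> S)"
    and V_dec: "\<And>x u l u' l'. (x, u, l) \<in> S \<Longrightarrow> (f (x, u), u', l') \<in> S \<Longrightarrow>
                  V (f (x, u), u', l') - V (x, u, l) \<le> - (norm x ^ 2) \<and> V (x, u, l) \<ge> 0"
  shows "lifted_lyapunov (\<lambda>x. f (x, \<psi> x)) S V"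
proof
  show "\<exists>b. (x, b) \<in> S" for x
    using graph by blast
  have lifted_dec: "V (f (x, \<psi> x), b') \<le> V (x, b) - norm x ^ 2 \<and> 0 \<le> V (x, b)"
    if "(x, b) \<in> S" "(f (x, \<psi> x), b') \<in> S" for x b b'
  proof -
    obtain u l u' l' where b: "b = (u, l)" "b' = (u', l')" by fastforce
    with that(1) have "u = \<psi> x" using graph by blast
    then show ?thesis using V_dec[of x u l u' l'] that b by auto
  qed
  show "V (f (x, \<psi> x), b') \<le> V (x, b) - norm x ^ 2"
    if "(x, b) \<in> S" "(f (x, \<psi> x), b') \<in> S" for x b b'
    using lifted_dec[OF that] by blast
  show "0 \<le> V (x, b)" if "(x, b) \<in> S" for x b
  proof -
    obtain l' where "(f (x, \<psi> x), \<psi> (f (x, \<psi> x)), l') \<in> S" using graph by blast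
    then show ?thesis using lifted_dec[OF that] by blast
  qed
qed

lemma continuous_on_poly_fun: "poly_fun p \<Longrightarrow> continuous_on UNIV p"
  by (induction rule: poly_fun.induct) (auto intro!: continuous_intros)

lemma continuous_on_poly_map: "poly_map G \<Longrightarrow> continuous_on UNIV G"
  unfolding poly_map_def
  by (intro continuous_on_componentwise[THEN iffD2]) (simp add: continuous_on_poly_fun)

lemma closed_poly_constraints:
  fixes g :: "'a::euclidean_space \<Rightarrow> real^'p" and h :: "'a \<Rightarrow> 'c::euclidean_space"
  assumes "poly_map g" "poly_map h"
  shows "closed {z. (\<forall>i. 0 \<le> g z $ i) \<and> h z = 0}"
proof (intro closed_Collect_conj closed_Collect_all)
  show "closed {z. 0 \<le> g z $ i}" for i
    using continuous_on_poly_map[OF assms(1)]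
    by (intro closed_Collect_le continuous_on_const continuous_on_component)
  show "closed {z. h z = 0}"
    using continuous_on_poly_map[OF assms(2)] by (intro closed_Collect_eq continuous_on_const)
qed

theorem theorem1:
  fixes f :: "(real^'n) \<times> (real^'m) \<Rightarrow> real^'n"
    and \<psi> :: "real^'n \<Rightarrow> real^'m"
    and g :: "(real^'n) \<times> (real^'m) \<times> (real^'l) \<Rightarrow> real^'p"
    and h :: "(real^'n) \<times> (real^'m) \<times> (real^'l) \<Rightarrow> real^'q"
    and V :: "(real^'n) \<times> (real^'m) \<times> (real^'l) \<Rightarrow> real"
  assumes f_poly: "poly_map f"
    and g_poly: "poly_map g"
    and h_poly: "poly_map h"
    and graph: "\<forall>x u. u = \<psi> x \<longleftrightarrow>
                   (\<exists>l. (\<forall>i. g (x, u, l) $ i \<ge> 0) \<and> h (x, u, l) = 0)"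
    and V_cont: "continuous_on UNIV V"
    and V_dec: "\<forall>x u l x' u' l'.
                  x' = f (x, u) \<and> (\<forall>i. g (x, u, l) $ i \<ge> 0) \<and> h (x, u, l) = 0
                  \<and> (\<forall>i. g (x', u', l') $ i \<ge> 0) \<and> h (x', u', l') = 0
                  \<longrightarrow> V (x', u', l') - V (x, u, l) \<le> - (norm x ^ 2) \<and> V (x, u, l) \<ge> 0"
  shows "globally_attractive (\<lambda>x. f (x, \<psi> x))
    \<and> (((\<exists>U. open U \<and> (0::real^'n) \<in> U \<and>
            bounded ((\<lambda>x. Inf {norm u + norm l | u l.
                        (\<forall>i. g (x, u, l) $ i \<ge> 0) \<and> h (x, u, l) = 0}) ` U))
         \<or> (\<forall>x u l u' l'. V (x, u, l) = V (x, u', l')))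
       \<longrightarrow> GAS (\<lambda>x. f (x, \<psi> x)))"
proof -
  define S where "S = {z. (\<forall>i. 0 \<le> g z $ i) \<and> h z = 0}"
  have lifted: "lifted_lyapunov (\<lambda>x. f (x, \<psi> x)) S V"
    by (rule lifted_lyapunov_closed_loop) (use graph V_dec in \<open>auto simp: S_def\<close>)
  have "closed S"
    unfolding S_def using g_poly h_poly by (rule closed_poly_constraints)
  have "lyapunov_stable (\<lambda>x. f (x, \<psi> x))" if U: "open U" "0 \<in> U"
    and bounded_Inf: "bounded ((\<lambda>x. Inf {norm u + norm l | u l.
                        (\<forall>i. g (x, u, l) $ i \<ge> 0) \<and> h (x, u, l) = 0}) ` U)" for U
  proof (rule lyapunov_stable_if_bounded_Inf[OF lifted V_cont \<open>closed S\<close> _ U])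
    show "norm b \<le> (\<lambda>(u, l). norm u + norm l) b" for b :: "(real^'m) \<times> (real^'l)"
      by (cases b) (simp add: norm_Pair_le)
    have "{norm u + norm l | u l. (\<forall>i. g (x, u, l) $ i \<ge> 0) \<and> h (x, u, l) = 0}
        = (\<lambda>(u, l). norm u + norm l) ` {b. (x, b) \<in> S}" for x
      unfolding S_def by auto
    with bounded_Inf show "bounded ((\<lambda>x. Inf ((\<lambda>(u, l). norm u + norm l) ` {b. (x, b) \<in> S})) ` U)"
      by simp
  qed
  moreover have "lyapunov_stable (\<lambda>x. f (x, \<psi> x))" if "\<forall>x u l u' l'. V (x, u, l) = V (x, u', l')"
    using lifted_lyapunov.lyapunov_stable_if_independent[OF lifted V_cont] that
    by (simp add: split_paired_all)
  ultimately show ?thesis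
    using lifted_lyapunov.globally_attractive[OF lifted] unfolding GAS_def by blast
qed

end
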